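(* Consider the homogeneous two-fluid model in $\mathbb{R}^d$: unknowns are the volume fractions $\alpha^\pm\in[0,1]$ with $\alpha^++\alpha^-=1$, the phase densities $\rho^\pm>0$, a common velocity field $\vec{u}$, a common pressure $p$ and the mixture specific internal energy $e$, satisfying \begin{align*} (\alpha^+\rho^+)_t + \nabla\cdot(\alpha^+\rho^+\vec{u}) &= 0,\\ (\alpha^-\rho^-)_t + \nabla\cdot(\alpha^-\rho^-\vec{u}) &= 0,\\ (\rho\vec{u})_t + \nabla\cdot(\rho\vec{u}\otimes\vec{u} + p\,\mathbb{I}) &= \rho\vec{g},\\ (\rho E)_t + \nabla\cdot(\rho H\vec{u}) &= \rho\vec{g}\cdot\vec{u}, \end{align*} where $\vec g$ is a constant gravity vector, $\rho=\alpha^+\rho^++\alpha^-\rho^-$, $E=e+\tfrac12|\vec u|^2$, $H=E+p/\rho$, and the system is closed by the mixture equation of state described in the context. Let $\alpha=\alpha^+-\alpha^-$, and let $s$ be the mixture specific entropy defined by $2\rho s=(1+\alpha)\rho^+s^++(1-\alpha)\rho^-s^-$. Then continuous solutions of this system satisfy \begin{align*} \vec{u}_t + \vec{u}\cdot\nabla\vec{u} + \frac{1}{\rho}\nabla p &= \vec{g},\\ p_t + \vec{u}\cdot\nabla p + \rho c_s^2\,\nabla\cdot\vec{u} &= 0,\\ \alpha_t + \vec{u}\cdot\nabla\alpha + (1-\alpha^2)\,\delta\,\nabla\cdot\vec{u} &= 0,\\ s_t + \vec{u}\cdot\nabla s &= 0, \end{align*} where $c_s$ and $\delta$ are defined as follows: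 with $(c_s^\pm)^2=\dfrac{\gamma^\pm p+\pi^\pm}{\rho^\pm}$ and $$\rho a^2=\frac{(1+\alpha)\rho^+(c_s^+)^2}{2(\gamma^+-1)}+\frac{(1-\alpha)\rho^-(c_s^-)^2}{2(\gamma^--1)},$$ $c_s>0$ is given by $$\frac{1}{\rho c_s^2}=\frac{(1+\alpha)\gamma^+}{2\rho^+(c_s^+)^2}+\frac{(1-\alpha)\gamma^-}{2\rho^-(c_s^-)^2}-\frac{1}{\rho a^2},$$ and $$\delta=\frac12\,\frac{\rho c_s^2(\gamma^-\pi^+-\gamma^+\pi^-)}{\rho^+\rho^-(c_s^+)^2(c_s^-)^2}.$$
   Context: Each pure fluid (superscript $+$ for liquid, $-$ for gas) obeys a stiffened-gas equation of state with constants $\gamma^\pm>1$, $C_V^\pm>0$, $\pi^\pm\ge 0$: $p^\pm+\pi^\pm=(\gamma^\pm-1)\rho^\pm e^\pm$ and $e^\pm=C_V^\pm T^\pm+\dfrac{\pi^\pm}{\gamma^\pm\rho^\pm}$, where $e^\pm,T^\pm$ are the specific internal energy and temperature of phase $\pm$. The mixture equation of state $p=\mathcal P(\alpha,\rho,e)$ is defined by requiring pressure and temperature equilibrium between the phases: given $\alpha\in[-1,1]$, $\rho>0$, $e>0$, one solves for $\rho^\pm,e^\pm$ the system $(1+\alpha)\rho^++(1-\alpha)\rho^-=2\rho$, $(1+\alpha)\rho^+e^++(1-\alpha)\rho^-e^-=2\rho e$, $p^+=p^-$, $T^+=T^-$, and sets $p=p^\pm$, $T=T^\pm$. Here $s^\pm$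 denotes the specific entropy of phase $\pm$ (a function of $(\rho^\pm,e^\pm)$ satisfying $T^\pm ds^\pm=de^\pm+p^\pm d(1/\rho^\pm)$). *)

theory Defs
  imports "HOL-Analysis.Analysis"
begin

text \<open>Points of space-time are pairs (t, x) with t :: real and x :: real^'n (R^d, d = CARD('n)).\<close>

definition pt :: "(real \<times> (real^'n) \<Rightarrow> real) \<Rightarrow> real \<times> (real^'n) \<Rightarrow> real" where
  "pt f z = deriv (\<lambda>\<tau>. f (\<tau>, snd z)) (fst z)"

definition px :: "'n \<Rightarrow> (real \<times> (real^'n) \<Rightarrow> real) \<Rightarrow> real \<times> (real^'n) \<Rightarrow> real" where
  "px i f z = deriv (\<lambda>\<xi>. f (fst z, snd z + \<xi> *\<^sub>R axis i 1)) 0"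

definition divg :: "(real \<times> (real^'n) \<Rightarrow> real^'n) \<Rightarrow> real \<times> (real^'n) \<Rightarrow> real" where
  "divg F z = (\<Sum>i\<in>UNIV. px i (\<lambda>w. F w $ i) z)"

definition adv :: "(real \<times> (real^'n) \<Rightarrow> real^'n) \<Rightarrow> (real \<times> (real^'n) \<Rightarrow> real) \<Rightarrow> real \<times> (real^'n) \<Rightarrow> real" where
  "adv u f z = (\<Sum>i\<in>UNIV. (u z $ i) * px i f z)"

text \<open>Stiffened gas: p + pi = (gamma-1) rho e,  e = Cv T + pi/(gamma rho).\<close>
definition sg_pressure :: "real \<Rightarrow> real \<Rightarrow> real \<Rightarrow> real \<Rightarrow> real" where
  "sg_pressure \<gamma> \<pi> r e = (\<gamma> - 1) * r * e - \<pi>"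

definition sg_temp :: "real \<Rightarrow> real \<Rightarrow> real \<Rightarrow> real \<Rightarrow> real \<Rightarrow> real" where
  "sg_temp \<gamma> Cv \<pi> r e = (e - \<pi> / (\<gamma> * r)) / Cv"

text \<open>S is a specific entropy of the phase: T dS = de + p d(1/rho), on the physical
  domain rho > 0, T > 0.\<close>
definition is_entropy :: "real \<Rightarrow> real \<Rightarrow> real \<Rightarrow> (real \<Rightarrow> real \<Rightarrow> real) \<Rightarrow> bool" where
  "is_entropy \<gamma> Cv \<pi> S \<longleftrightarrow>
     (\<forall>r e. r > 0 \<longrightarrow> sg_temp \<gamma> Cv \<pi> r e > 0 \<longrightarrow>
        ((\<lambda>(a, b). S a b) has_derivative
          (\<lambda>(dr, de). (de - sg_pressure \<gamma> \<pi> r e / r\<^sup>2 * dr) / sg_temp \<gamma> Cv \<pi> r e)) (at (r, e)))"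

definition mix_cs :: "real \<Rightarrow> real \<Rightarrow> real \<Rightarrow> real \<Rightarrow> real \<Rightarrow> real \<Rightarrow> real \<Rightarrow> real \<Rightarrow> real" where
  "mix_cs gp gm pip pim a rp rm p =
    (let csp2 = (gp * p + pip) / rp; csm2 = (gm * p + pim) / rm;
         rho = ((1 + a) * rp + (1 - a) * rm) / 2;
         rhoa2 = (1 + a) * rp * csp2 / (2 * (gp - 1)) + (1 - a) * rm * csm2 / (2 * (gm - 1));
         inv = (1 + a) * gp / (2 * rp * csp2) + (1 - a) * gm / (2 * rm * csm2) - 1 / rhoa2
     in sqrt (1 / (rho * inv)))"

definition mix_delta :: "real \<Rightarrow> real \<Rightarrow> real \<Rightarrow> real \<Rightarrow> real \<Rightarrow> real \<Rightarrow> real \<Rightarrow> real \<Rightarrow> real" where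
  "mix_delta gp gm pip pim a rp rm p =
    (let csp2 = (gp * p + pip) / rp; csm2 = (gm * p + pim) / rm;
         rho = ((1 + a) * rp + (1 - a) * rm) / 2;
         cs = mix_cs gp gm pip pim a rp rm p
     in (1/2) * (rho * cs\<^sup>2 * (gm * pip - gp * pim)) / (rp * rm * csp2 * csm2))"

end

theory Submission
  imports Defs
begin

text \<open>Write D_t = d/dt + u . grad for the material derivative. Expanded by the product rule, each
  conservation law becomes a transport equation once the partial mass equations
  D_t(alpha rho) = - alpha rho div u are used: rho D_t u + grad p = rho g and, after the kinetic energy
  is subtracted with the momentum equation, rho D_t e + p div u = 0.
  The equilibrium closure is then differentiated along the flow. On the one hand
  rho e = sum of alpha (p + pi)/(gamma - 1); on the other hand the two phase temperatures are
  (gamma p + pi)/(C_V gamma (gamma - 1) rho) and stay equal. Together with the mass equations this gives two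
  linear relations between D_t alpha, D_t p and div u, whose solution is
  D_t p = - rho c_s^2 div u and D_t alpha = - (1 - alpha^2) delta div u; that 1/(rho c_s^2) > 0 is a
  Cauchy-Schwarz inequality. Finally, the Gibbs relation T ds = de + p d(1/rho) of each phase with the
  common temperature T yields sum of alpha rho D_t s = 0, hence D_t s = 0 for the mixture entropy.\<close>

definition material_deriv ::
    "(real \<times> (real^'n) \<Rightarrow> real^'n) \<Rightarrow> (real \<times> (real^'n) \<Rightarrow> real) \<Rightarrow> real \<times> (real^'n) \<Rightarrow> real"
  where
  "material_deriv u f z = pt f z + adv u f z"

lemma deriv_line_has_derivative:
  fixes f :: "'a::real_normed_vector \<Rightarrow> real"
  assumes "(f has_derivative f') (at (a + t *\<^sub>R v))"
  shows "deriv (\<lambda>\<tau>. f (a + \<tau> *\<^sub>R v)) t = f' v"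
proof (rule DERIV_imp_deriv)
  have "((\<lambda>\<tau>. a + \<tau> *\<^sub>R v) has_derivative (\<lambda>\<tau>. \<tau> *\<^sub>R v)) (at t)"
    by (auto intro!: derivative_eq_intros)
  from has_derivative_compose[OF this assms]
  have "((\<lambda>\<tau>. f (a + \<tau> *\<^sub>R v)) has_derivative (\<lambda>\<tau>. f' (\<tau> *\<^sub>R v))) (at t)" .
  moreover have "(\<lambda>\<tau>. f' (\<tau> *\<^sub>R v)) = (*) (f' v)"
    using linear_scale[OF has_derivative_linear[OF assms]] by (auto simp: fun_eq_iff)
  ultimately show "((\<lambda>\<tau>. f (a + \<tau> *\<^sub>R v)) has_real_derivative f' v) (at t)"
    by (simp add: has_field_derivative_def)
qed

lemma pt_has_derivative:
  assumes "(f has_derivative f') (at z)"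
  shows "pt f z = f' (1, 0)"
  using deriv_line_has_derivative[of f f' "(0, snd z)" "fst z" "(1, 0)"] assms
  by (simp add: pt_def)

lemma px_has_derivative:
  assumes "(f has_derivative f') (at z)"
  shows "px i f z = f' (0, axis i 1)"
proof -
  have "(\<lambda>\<xi>. f (fst z, snd z + \<xi> *\<^sub>R axis i 1)) = (\<lambda>\<xi>. f (z + \<xi> *\<^sub>R (0, axis i 1)))"
    by (cases z) simp
  moreover have "(f has_derivative f') (at (z + 0 *\<^sub>R (0, axis i 1)))"
    using assms by (simp del: scaleR_Pair)
  ultimately show ?thesis
    by (simp add: px_def deriv_line_has_derivative del: scaleR_Pair)
qed

lemma adv_has_derivative:
  assumes "(f has_derivative f') (at z)"
  shows "adv u f z = f' (0, u z)"
proof -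
  have "(0, u z) = (\<Sum>i\<in>UNIV. (u z $ i) *\<^sub>R (0, axis i 1))"
    by (subst (1) basis_expansion[symmetric]) (simp add: sum_prod scalar_mult_eq_scaleR)
  then have "f' (0, u z) = (\<Sum>i\<in>UNIV. f' ((u z $ i) *\<^sub>R (0, axis i 1)))"
    using linear_sum[OF has_derivative_linear[OF assms]] by metis
  then show ?thesis
    by (simp add: adv_def px_has_derivative[OF assms] linear_scale[OF has_derivative_linear[OF assms]]
        del: scaleR_Pair)
qed

lemma material_deriv_has_derivative:
  assumes "(f has_derivative f') (at z)"
  shows "material_deriv u f z = f' (1, u z)"
  using linear_add[OF has_derivative_linear[OF assms], of "(1, 0)" "(0, u z)"]
  by (simp add: material_deriv_def pt_has_derivative[OF assms] adv_has_derivative[OF assms])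

lemma has_derivative_vec_nth:
  "(f has_derivative f') F \<Longrightarrow> ((\<lambda>x. f x $ i) has_derivative (\<lambda>x. f' x $ i)) F"
  using bounded_linear.has_derivative[OF bounded_linear_vec_nth] .

lemma differentiable_vec_nth [simp]:
  "f differentiable F \<Longrightarrow> (\<lambda>x. f x $ i) differentiable F"
  using has_derivative_vec_nth by (fastforce simp: differentiable_def)

lemma material_deriv_add:
  assumes "f differentiable (at z)" "g differentiable (at z)"
  shows "material_deriv u (\<lambda>w. f w + g w) z = material_deriv u f z + material_deriv u g z"
proof -
  from assms obtain f' g' where "(f has_derivative f') (at z)" "(g has_derivative g') (at z)"
    by (auto simp: differentiable_def)
  then show ?thesis
    by (simp add: material_deriv_has_derivative material_deriv_has_derivative[OF has_derivative_add])
qed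

lemma material_deriv_diff:
  assumes "f differentiable (at z)" "g differentiable (at z)"
  shows "material_deriv u (\<lambda>w. f w - g w) z = material_deriv u f z - material_deriv u g z"
proof -
  from assms obtain f' g' where "(f has_derivative f') (at z)" "(g has_derivative g') (at z)"
    by (auto simp: differentiable_def)
  then show ?thesis
    by (simp add: material_deriv_has_derivative material_deriv_has_derivative[OF has_derivative_diff])
qed

lemma material_deriv_mult:
  assumes "f differentiable (at z)" "g differentiable (at z)"
  shows "material_deriv u (\<lambda>w. f w * g w) z = material_deriv u f z * g z + f z * material_deriv u g z"
proof -
  from assms obtain f' g' where "(f has_derivative f') (at z)" "(g has_derivative g') (at z)"
    by (auto simp: differentiable_def)
  then show ?thesis
    by (simp add: material_deriv_has_derivative material_deriv_has_derivative[OF has_derivative_mult])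
qed

lemma material_deriv_const [simp]: "material_deriv u (\<lambda>w. c) z = 0"
  using material_deriv_has_derivative[of "\<lambda>w. c" "\<lambda>h. 0" z u] by simp

lemma material_deriv_divide_const:
  assumes "f differentiable (at z)"
  shows "material_deriv u (\<lambda>w. f w / c) z = material_deriv u f z / c"
  using material_deriv_mult[OF assms differentiable_const, of u "1 / c"] by simp

lemma material_deriv_cong_open:
  assumes "open D" "z \<in> D" "\<And>w. w \<in> D \<Longrightarrow> f w = g w" "g differentiable (at z)"
  shows "material_deriv u f z = material_deriv u g z" and "f differentiable (at z)"
proof -
  from assms(4) obtain g' where g': "(g has_derivative g') (at z)"
    by (auto simp: differentiable_def)
  have "(f has_derivative g') (at z)"
    using has_derivative_transform_within_open[OF g' assms(1,2)] assms(3) by metis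
  then show "material_deriv u f z = material_deriv u g z" "f differentiable (at z)"
    using g' by (auto simp: material_deriv_has_derivative differentiable_def)
qed

lemma px_add:
  assumes "f differentiable (at z)" "g differentiable (at z)"
  shows "px i (\<lambda>w. f w + g w) z = px i f z + px i g z"
proof -
  from assms obtain f' g' where "(f has_derivative f') (at z)" "(g has_derivative g') (at z)"
    by (auto simp: differentiable_def)
  then show ?thesis
    by (simp add: px_has_derivative px_has_derivative[OF has_derivative_add])
qed

lemma divg_scaleR:
  assumes "f differentiable (at z)" "F differentiable (at z)"
  shows "divg (\<lambda>w. f w *\<^sub>R F w) z = adv F f z + f z * divg F z"
proof -
  from assms obtain f' F' where f': "(f has_derivative f') (at z)" and F': "(F has_derivative F') (at z)"
    by (auto simp: differentiable_def)
  have "((\<lambda>w. f w * F w $ i) has_derivative (\<lambda>v. f z * F' v $ i + f' v * F z $ i)) (at z)" for i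
    using f' has_derivative_vec_nth[OF F'] by (rule has_derivative_mult)
  then have "px i (\<lambda>w. f w * F w $ i) z = f z * F' (0, axis i 1) $ i + f' (0, axis i 1) * F z $ i" for i
    by (rule px_has_derivative)
  then show ?thesis
    by (simp add: divg_def adv_def px_has_derivative[OF f'] px_has_derivative[OF has_derivative_vec_nth[OF F']]
        sum.distrib sum_distrib_left algebra_simps)
qed

lemma material_deriv_half_norm_sq:
  assumes "v differentiable (at z)"
  shows "material_deriv u (\<lambda>w. (norm (v w))\<^sup>2 / 2) z = (\<Sum>j\<in>UNIV. v z $ j * material_deriv u (\<lambda>w. v w $ j) z)"
    and "(\<lambda>w. (norm (v w))\<^sup>2 / 2) differentiable (at z)"
proof -
  from assms obtain v' where v': "(v has_derivative v') (at z)"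
    by (auto simp: differentiable_def)
  have "((\<lambda>w. (norm (v w))\<^sup>2 / 2) has_derivative (\<lambda>h. v z \<bullet> v' h)) (at z)"
    using v' by (auto intro!: derivative_eq_intros simp: inner_commute power2_norm_eq_inner)
  then show "material_deriv u (\<lambda>w. (norm (v w))\<^sup>2 / 2) z = (\<Sum>j\<in>UNIV. v z $ j * material_deriv u (\<lambda>w. v w $ j) z)"
    and "(\<lambda>w. (norm (v w))\<^sup>2 / 2) differentiable (at z)"
    by (auto simp: material_deriv_has_derivative material_deriv_has_derivative[OF has_derivative_vec_nth[OF v']]
        inner_vec_def differentiable_def)
qed

lemma adv_add:
  assumes "f differentiable (at z)" "g differentiable (at z)"
  shows "adv u (\<lambda>w. f w + g w) z = adv u f z + adv u g z"
  using assms by (simp add: adv_def px_add sum.distrib distrib_left)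

lemma conservation_law_material:
  assumes "f differentiable (at z)" "u differentiable (at z)"
  shows "pt f z + divg (\<lambda>w. f w *\<^sub>R u w) z = material_deriv u f z + f z * divg u z"
  using assms by (simp add: divg_scaleR material_deriv_def)

lemma momentum_flux_material:
  fixes rho p :: "real \<times> (real^'n) \<Rightarrow> real"
  assumes "rho differentiable (at z)" "u differentiable (at z)" "p differentiable (at z)"
  shows "pt (\<lambda>w. rho w * (u w $ j)) z
           + (\<Sum>i\<in>UNIV. px i (\<lambda>w. rho w * (u w $ i) * (u w $ j) + (if i = j then p w else 0)) z)
         = (material_deriv u rho z + rho z * divg u z) * u z $ j + rho z * material_deriv u (\<lambda>w. u w $ j) z
           + px j p z"
proof -
  have "px i (\<lambda>w. rho w * (u w $ i) * (u w $ j) + (if i = j then p w else 0)) z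
        = px i (\<lambda>w. (rho w * u w $ j) * u w $ i) z + (if i = j then px j p z else 0)" for i
    using assms by (cases "i = j") (simp_all add: px_add mult_ac)
  then have "(\<Sum>i\<in>UNIV. px i (\<lambda>w. rho w * (u w $ i) * (u w $ j) + (if i = j then p w else 0)) z)
             = divg (\<lambda>w. (rho w * u w $ j) *\<^sub>R u w) z + px j p z"
    by (simp add: divg_def sum.distrib)
  then show ?thesis
    using assms by (simp add: conservation_law_material material_deriv_mult algebra_simps)
qed

lemma energy_flux_material:
  fixes rho p e :: "real \<times> (real^'n) \<Rightarrow> real"
  assumes "rho differentiable (at z)" "u differentiable (at z)" "p differentiable (at z)"
    "e differentiable (at z)"
  defines "EE \<equiv> \<lambda>w. e w + (norm (u w))\<^sup>2 / 2"
  shows "pt (\<lambda>w. rho w * EE w) z + divg (\<lambda>w. (rho w * EE w + p w) *\<^sub>R u w) z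
         = (material_deriv u rho z + rho z * divg u z) * EE z + rho z * material_deriv u e z + p z * divg u z
           + (\<Sum>j\<in>UNIV. u z $ j * (rho z * material_deriv u (\<lambda>w. u w $ j) z + px j p z))"
proof -
  note kinetic = material_deriv_half_norm_sq[OF assms(2)]
  have "EE differentiable (at z)"
    using assms(4) kinetic(2) by (simp add: EE_def)
  then have "pt (\<lambda>w. rho w * EE w) z + divg (\<lambda>w. (rho w * EE w + p w) *\<^sub>R u w) z
             = material_deriv u (\<lambda>w. rho w * EE w) z + adv u p z + (rho z * EE z + p z) * divg u z"
    using assms(1-3) by (simp add: divg_scaleR adv_add material_deriv_def)
  also have "material_deriv u (\<lambda>w. rho w * EE w) z
             = material_deriv u rho z * EE z + rho z * (material_deriv u e z
               + (\<Sum>j\<in>UNIV. u z $ j * material_deriv u (\<lambda>w. u w $ j) z))"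
    using assms(1,4) \<open>EE differentiable (at z)\<close> kinetic
    by (simp add: material_deriv_mult EE_def material_deriv_add)
  finally show ?thesis
    by (simp add: adv_def algebra_simps sum.distrib sum_distrib_left)
qed

lemma sg_temp_eq_pressure:
  assumes "\<gamma> \<noteq> 0" "\<gamma> \<noteq> 1" "r \<noteq> 0"
  shows "sg_temp \<gamma> Cv \<pi> r \<epsilon> = (\<gamma> * sg_pressure \<gamma> \<pi> r \<epsilon> + \<pi>) / (Cv * \<gamma> * (\<gamma> - 1) * r)"
proof -
  have "\<gamma> * sg_pressure \<gamma> \<pi> r \<epsilon> + \<pi> = (\<gamma> - 1) * (\<gamma> * r * \<epsilon> - \<pi>)"
    by (simp add: sg_pressure_def algebra_simps)
  moreover have "\<epsilon> - \<pi> / (\<gamma> * r) = (\<gamma> * r * \<epsilon> - \<pi>) / (\<gamma> * r)"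
    using assms by (simp add: field_simps)
  ultimately show ?thesis
    using assms by (simp add: sg_temp_def)
qed

lemma material_deriv_entropy:
  assumes S: "is_entropy \<gamma> Cv \<pi> S" and "r differentiable (at z)" "\<epsilon> differentiable (at z)"
    and "r z > 0" "sg_temp \<gamma> Cv \<pi> (r z) (\<epsilon> z) > 0"
  shows "material_deriv u (\<lambda>w. S (r w) (\<epsilon> w)) z
           = (material_deriv u \<epsilon> z - sg_pressure \<gamma> \<pi> (r z) (\<epsilon> z) / (r z)\<^sup>2 * material_deriv u r z)
             / sg_temp \<gamma> Cv \<pi> (r z) (\<epsilon> z)"
    and "(\<lambda>w. S (r w) (\<epsilon> w)) differentiable (at z)"
proof -
  from assms(2,3) obtain R E where R: "(r has_derivative R) (at z)" and E: "(\<epsilon> has_derivative E) (at z)"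
    by (auto simp: differentiable_def)
  have "((\<lambda>(a, b). S a b) has_derivative
         (\<lambda>(dr, de). (de - sg_pressure \<gamma> \<pi> (r z) (\<epsilon> z) / (r z)\<^sup>2 * dr) / sg_temp \<gamma> Cv \<pi> (r z) (\<epsilon> z)))
        (at (r z, \<epsilon> z))"
    using S assms(4,5) unfolding is_entropy_def by blast
  from has_derivative_compose[OF has_derivative_Pair[OF R E] this]
  have "((\<lambda>w. S (r w) (\<epsilon> w)) has_derivative
         (\<lambda>v. (E v - sg_pressure \<gamma> \<pi> (r z) (\<epsilon> z) / (r z)\<^sup>2 * R v) / sg_temp \<gamma> Cv \<pi> (r z) (\<epsilon> z))) (at z)"
    by simp
  then show "material_deriv u (\<lambda>w. S (r w) (\<epsilon> w)) z
           = (material_deriv u \<epsilon> z - sg_pressure \<gamma> \<pi> (r z) (\<epsilon> z) / (r z)\<^sup>2 * material_deriv u r z)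
             / sg_temp \<gamma> Cv \<pi> (r z) (\<epsilon> z)"
    and "(\<lambda>w. S (r w) (\<epsilon> w)) differentiable (at z)"
    using R E by (auto simp: material_deriv_has_derivative differentiable_def)
qed

text \<open>The paper's 1/(rho c_s^2), in terms of the volume fractions ap = (1 + alpha)/2, am = (1 - alpha)/2
  and the phase moduli Xp = rho^+ (c_s^+)^2 = gp p + pip, Xm = rho^- (c_s^-)^2 = gm p + pim; the last
  denominator is rho a^2.\<close>
definition inv_rho_cs2 :: "real \<Rightarrow> real \<Rightarrow> real \<Rightarrow> real \<Rightarrow> real \<Rightarrow> real \<Rightarrow> real" where
  "inv_rho_cs2 gp gm Xp Xm ap am =
     ap * gp / Xp + am * gm / Xm - 1 / (ap * Xp / (gp - 1) + am * Xm / (gm - 1))"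

lemma inv_rho_cs2_pos:
  fixes gp gm Xp Xm ap am :: real
  assumes "gp > 1" "gm > 1" "Xp > 0" "Xm > 0" "ap \<ge> 0" "am \<ge> 0" "ap + am = 1"
  shows "inv_rho_cs2 gp gm Xp Xm ap am > 0"
proof -
  define x y where "x = Xp / (gp - 1)" and "y = Xm / (gm - 1)"
  have "x > 0" "y > 0"
    using assms by (auto simp: x_def y_def)
  have "(ap * x + am * y) * (ap / x + am / y) = 1 + ap * am * (x - y)\<^sup>2 / (x * y)"
    using \<open>x > 0\<close> \<open>y > 0\<close> \<open>ap + am = 1\<close>
    by (simp add: field_simps power2_eq_square) algebra
  also have "\<dots> \<ge> 1"
    using \<open>x > 0\<close> \<open>y > 0\<close> assms by simp
  finally have "1 / (ap * x + am * y) \<le> ap / x + am / y"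
    using \<open>x > 0\<close> \<open>y > 0\<close> assms
    by (smt (verit, best) divide_le_eq mult.commute mult_nonneg_nonneg divide_nonneg_pos)
  moreover have "ap / x + am / y = ap * (gp - 1) / Xp + am * (gm - 1) / Xm"
    using assms by (simp add: x_def y_def)
  moreover have "ap / Xp + am / Xm > 0"
    using assms by (smt (verit) divide_nonneg_pos divide_pos_pos)
  ultimately show ?thesis
    using assms unfolding inv_rho_cs2_def x_def y_def by (simp add: field_simps)
qed

lemma inv_rho_cs2_identity:
  fixes gp gm Xp Xm ap am :: real
  assumes "gp > 1" "gm > 1" "Xp > 0" "Xm > 0" "ap + am = 1"
    and "ap * Xp / (gp - 1) + am * Xm / (gm - 1) \<noteq> 0"
  shows "ap * am * (gm * Xp - gp * Xm) / (Xp * Xm) * (Xp / (gp - 1) - Xm / (gm - 1))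
           + ap / (gp - 1) + am / (gm - 1)
         = (ap * Xp / (gp - 1) + am * Xm / (gm - 1)) * inv_rho_cs2 gp gm Xp Xm ap am"
proof -
  define qp qm where "qp = gp - 1" and "qm = gm - 1"
  have "qp > 0" "qm > 0" "gp = qp + 1" "gm = qm + 1" "am = 1 - ap"
    using assms by (auto simp: qp_def qm_def)
  have "(ap * Xp / qp + am * Xm / qm) * inv_rho_cs2 gp gm Xp Xm ap am
        = (ap * Xp / qp + am * Xm / qm) * (ap * gp / Xp + am * gm / Xm) - 1"
    using assms by (simp add: inv_rho_cs2_def right_diff_distrib qp_def qm_def)
  also have "\<dots> = ap * am * (gm * Xp - gp * Xm) / (Xp * Xm) * (Xp / qp - Xm / qm) + ap / qp + am / qm"
    using \<open>qp > 0\<close> \<open>qm > 0\<close> assms(3,4)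
    unfolding \<open>gp = qp + 1\<close> \<open>gm = qm + 1\<close> \<open>am = 1 - ap\<close>
    by (simp add: field_simps)
  finally show ?thesis
    by (simp add: qp_def qm_def)
qed

lemma mix_cs_sq:
  fixes gp gm pip pim ap am rp rm p :: real
  assumes "gp > 1" "gm > 1" "gp * p + pip > 0" "gm * p + pim > 0" "rp > 0" "rm > 0"
    and "ap \<ge> 0" "am \<ge> 0" "ap + am = 1"
  shows "(ap * rp + am * rm) * (mix_cs gp gm pip pim (ap - am) rp rm p)\<^sup>2
           = 1 / inv_rho_cs2 gp gm (gp * p + pip) (gm * p + pim) ap am"
proof -
  let ?inv = "inv_rho_cs2 gp gm (gp * p + pip) (gm * p + pim) ap am"
  have weights: "1 + (ap - am) = 2 * ap" "1 - (ap - am) = 2 * am"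
    using assms by auto
  have density: "2 * (ap * rp) + 2 * (am * rm) = 2 * (ap * rp + am * rm)"
    by simp
  have "mix_cs gp gm pip pim (ap - am) rp rm p = sqrt (1 / ((ap * rp + am * rm) * ?inv))"
    using assms unfolding mix_cs_def inv_rho_cs2_def Let_def weights
    by (simp add: mult.assoc density del: distrib_left_numeral right_diff_distrib_numeral)
  moreover have "?inv > 0"
    using assms by (intro inv_rho_cs2_pos) auto
  moreover have "ap * rp + am * rm > 0"
    using assms by (smt (verit) mult_nonneg_nonneg mult_pos_pos)
  ultimately show ?thesis
    by simp
qed

lemma mix_delta_eq:
  fixes gp gm pip pim ap am rp rm p :: real
  assumes "gp > 1" "gm > 1" "gp * p + pip > 0" "gm * p + pim > 0" "rp > 0" "rm > 0"
    and "ap \<ge> 0" "am \<ge> 0" "ap + am = 1"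
  shows "mix_delta gp gm pip pim (ap - am) rp rm p
           = (gm * pip - gp * pim)
             / (2 * inv_rho_cs2 gp gm (gp * p + pip) (gm * p + pim) ap am * (gp * p + pip) * (gm * p + pim))"
proof -
  have weights: "1 + (ap - am) = 2 * ap" "1 - (ap - am) = 2 * am"
    using assms by auto
  have density: "2 * (ap * rp) + 2 * (am * rm) = 2 * (ap * rp + am * rm)"
    by simp
  show ?thesis
    using mix_cs_sq[OF assms] assms unfolding mix_delta_def Let_def weights
    by (simp add: mult.assoc density del: distrib_left_numeral right_diff_distrib_numeral)
qed

lemma phase_entropy_identity:
  fixes q r \<epsilon> p \<pi> a da dr d\<epsilon> dp \<theta> :: real
  assumes "r \<noteq> 0" "q * r * \<epsilon> = p + \<pi>" "q * (dr * \<epsilon> + r * d\<epsilon>) = dp" "a * dr = - r * (da + a * \<theta>)"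
  shows "q * (a * r * (d\<epsilon> - p / r\<^sup>2 * dr)) = a * dp + ((q + 1) * p + \<pi>) * (da + a * \<theta>)"
proof -
  have "q * (a * r * d\<epsilon>) = a * (q * (dr * \<epsilon> + r * d\<epsilon>)) - q * \<epsilon> * (a * dr)"
    by (simp add: algebra_simps)
  also have "\<dots> = a * dp + q * r * \<epsilon> * (da + a * \<theta>)"
    unfolding assms(3,4) by (simp add: algebra_simps)
  finally have "q * (a * r * d\<epsilon>) = a * dp + (p + \<pi>) * (da + a * \<theta>)"
    using assms(2) by simp
  moreover have "q * (a * r * (p / r\<^sup>2 * dr)) = q * p * (a * dr) / r"
    using assms(1) by (simp add: power2_eq_square field_simps)
  then have "q * (a * r * (p / r\<^sup>2 * dr)) = - q * p * (da + a * \<theta>)"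
    using assms(1,4) by simp
  ultimately show ?thesis
    by (simp add: algebra_simps)
qed

text \<open>The hypotheses of the theorem, without those the argument never uses
  (pi >= 0, e > 0 and the upper bounds on the volume fractions).\<close>
locale homogeneous_two_fluid =
  fixes gp gm Cvp Cvm pip pim :: real
    and D :: "(real \<times> (real^'n)) set"
    and ap am rp rm p e ep em rho al EE s :: "real \<times> (real^'n) \<Rightarrow> real"
    and u :: "real \<times> (real^'n) \<Rightarrow> real^'n"
    and g :: "real^'n"
    and Sp Sm :: "real \<Rightarrow> real \<Rightarrow> real"
  assumes rho_def: "\<And>z. rho z = ap z * rp z + am z * rm z"
    and al_def: "\<And>z. al z = ap z - am z"
    and EE_def: "\<And>z. EE z = e z + (norm (u z))\<^sup>2 / 2"
    and s_def: "\<And>z. s z = ((1 + (ap z - am z)) * rp z * Sp (rp z) (ep z)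
                    + (1 - (ap z - am z)) * rm z * Sm (rm z) (em z)) / (2 * (ap z * rp z + am z * rm z))"
    and gas: "gp > 1" "gm > 1" "Cvp > 0" "Cvm > 0"
    and entp: "is_entropy gp Cvp pip Sp" and entm: "is_entropy gm Cvm pim Sm"
    and D_open: "open D"
    and diff: "\<And>z. z \<in> D \<Longrightarrow> ap differentiable (at z) \<and> am differentiable (at z) \<and>
                 rp differentiable (at z) \<and> rm differentiable (at z) \<and> u differentiable (at z) \<and>
                 p differentiable (at z) \<and> e differentiable (at z)"
    and frac: "\<And>z. z \<in> D \<Longrightarrow> 0 \<le> ap z \<and> 0 \<le> am z \<and> ap z + am z = 1"
    and pos: "\<And>z. z \<in> D \<Longrightarrow> rp z > 0 \<and> rm z > 0"
    and eos_energy: "\<And>z. z \<in> D \<Longrightarrow>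
          (1 + al z) * rp z * ep z + (1 - al z) * rm z * em z = 2 * rho z * e z"
    and eos_p: "\<And>z. z \<in> D \<Longrightarrow>
          sg_pressure gp pip (rp z) (ep z) = p z \<and> sg_pressure gm pim (rm z) (em z) = p z"
    and eos_T: "\<And>z. z \<in> D \<Longrightarrow> sg_temp gp Cvp pip (rp z) (ep z) = sg_temp gm Cvm pim (rm z) (em z)"
    and T_pos: "\<And>z. z \<in> D \<Longrightarrow> sg_temp gp Cvp pip (rp z) (ep z) > 0"
    and mass_p: "\<And>z. z \<in> D \<Longrightarrow>
          pt (\<lambda>w. ap w * rp w) z + divg (\<lambda>w. (ap w * rp w) *\<^sub>R u w) z = 0"
    and mass_m: "\<And>z. z \<in> D \<Longrightarrow>
          pt (\<lambda>w. am w * rm w) z + divg (\<lambda>w. (am w * rm w) *\<^sub>R u w) z = 0"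
    and momentum: "\<And>z j. z \<in> D \<Longrightarrow>
          pt (\<lambda>w. rho w * (u w $ j)) z
          + (\<Sum>i\<in>UNIV. px i (\<lambda>w. rho w * (u w $ i) * (u w $ j) + (if i = j then p w else 0)) z)
          = rho z * (g $ j)"
    and energy: "\<And>z. z \<in> D \<Longrightarrow>
          pt (\<lambda>w. rho w * EE w) z + divg (\<lambda>w. (rho w * EE w + p w) *\<^sub>R u w) z
          = rho z * (g \<bullet> u z)"
begin

abbreviation Dt :: "(real \<times> (real^'n) \<Rightarrow> real) \<Rightarrow> real \<times> (real^'n) \<Rightarrow> real" where
  "Dt f z \<equiv> material_deriv u f z"

abbreviation Xp :: "real \<times> (real^'n) \<Rightarrow> real" where
  "Xp z \<equiv> gp * p z + pip"

abbreviation Xm :: "real \<times> (real^'n) \<Rightarrow> real" where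
  "Xm z \<equiv> gm * p z + pim"

lemma state_differentiable:
  assumes "z \<in> D"
  shows "ap differentiable (at z)" "am differentiable (at z)" "rp differentiable (at z)"
    "rm differentiable (at z)" "u differentiable (at z)" "p differentiable (at z)" "e differentiable (at z)"
  using diff[OF assms] by auto

lemma rho_pos: "z \<in> D \<Longrightarrow> rho z > 0"
  using frac pos by (smt (verit) mult_nonneg_nonneg mult_pos_pos rho_def)

lemma phase_energy:
  assumes "z \<in> D"
  shows "ep z = (p z + pip) / ((gp - 1) * rp z)" "em z = (p z + pim) / ((gm - 1) * rm z)"
  using eos_p[OF assms] pos[OF assms] gas by (auto simp: sg_pressure_def field_simps)

lemma phase_energy_differentiable:
  assumes "z \<in> D"
  shows "ep differentiable (at z)" "em differentiable (at z)"
  using material_deriv_cong_open(2)[OF D_open assms phase_energy(1)]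
    material_deriv_cong_open(2)[OF D_open assms phase_energy(2)]
    state_differentiable[OF assms] pos[OF assms] gas by auto

lemma phase_temperature:
  assumes "z \<in> D"
  shows "sg_temp gp Cvp pip (rp z) (ep z) = Xp z / (Cvp * gp * (gp - 1) * rp z)"
    and "sg_temp gm Cvm pim (rm z) (em z) = Xm z / (Cvm * gm * (gm - 1) * rm z)"
  using sg_temp_eq_pressure eos_p[OF assms] pos[OF assms] gas by auto

lemma phase_modulus_pos:
  assumes "z \<in> D"
  shows "Xp z > 0" "Xm z > 0"
proof -
  have "Xp z / (Cvp * gp * (gp - 1) * rp z) > 0" "Xm z / (Cvm * gm * (gm - 1) * rm z) > 0"
    using T_pos[OF assms] eos_T[OF assms] by (simp_all add: phase_temperature[OF assms])
  moreover have "Cvp * gp * (gp - 1) * rp z > 0" "Cvm * gm * (gm - 1) * rm z > 0"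
    using pos[OF assms] gas by simp_all
  ultimately show "Xp z > 0" "Xm z > 0"
    by (simp_all add: zero_less_divide_iff)
qed

lemma am_rate:
  assumes "z \<in> D"
  shows "Dt am z = - Dt ap z"
proof -
  have "\<And>w. w \<in> D \<Longrightarrow> am w = 1 - ap w"
    using frac by (metis add_diff_cancel_left')
  then have "Dt am z = Dt (\<lambda>w. 1 - ap w) z"
    using state_differentiable[OF assms] by (intro material_deriv_cong_open(1)[OF D_open assms]) auto
  then show ?thesis
    using state_differentiable[OF assms] by (simp add: material_deriv_diff)
qed

lemma partial_density_rate:
  assumes "z \<in> D"
  shows "Dt (\<lambda>w. ap w * rp w) z = - ap z * rp z * divg u z"
    and "Dt (\<lambda>w. am w * rm w) z = - am z * rm z * divg u z"
  using mass_p[OF assms] mass_m[OF assms] state_differentiable[OF assms]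
  by (simp_all add: conservation_law_material)

lemma rho_eq: "rho = (\<lambda>w. ap w * rp w + am w * rm w)"
  using rho_def by auto

lemma density_rate:
  assumes "z \<in> D"
  shows "Dt rho z = - rho z * divg u z"
  using partial_density_rate[OF assms] state_differentiable[OF assms]
  by (simp add: rho_eq material_deriv_add algebra_simps)

lemma rho_differentiable: "z \<in> D \<Longrightarrow> rho differentiable (at z)"
  using state_differentiable by (simp add: rho_eq)

lemma velocity_rate:
  assumes "z \<in> D"
  shows "rho z * Dt (\<lambda>w. u w $ j) z + px j p z = rho z * g $ j"
  using momentum[OF assms, of j] density_rate[OF assms]
    momentum_flux_material[OF rho_differentiable[OF assms] state_differentiable(5,6)[OF assms]]
  by simp

lemma internal_energy_rate:
  assumes "z \<in> D"
  shows "rho z * Dt e z + p z * divg u z = 0"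
proof -
  have "EE = (\<lambda>w. e w + (norm (u w))\<^sup>2 / 2)"
    using EE_def by auto
  then have "rho z * (g \<bullet> u z) = rho z * Dt e z + p z * divg u z + (\<Sum>j\<in>UNIV. u z $ j * (rho z * g $ j))"
    using energy[OF assms] density_rate[OF assms] velocity_rate[OF assms]
      energy_flux_material[OF rho_differentiable[OF assms] state_differentiable(5,6,7)[OF assms]]
    by simp
  moreover have "(\<Sum>j\<in>UNIV. u z $ j * (rho z * g $ j)) = rho z * (g \<bullet> u z)"
    by (simp add: inner_vec_def sum_distrib_left mult_ac)
  ultimately show ?thesis
    by simp
qed

lemma mixture_internal_energy:
  assumes "z \<in> D"
  shows "rho z * e z = ap z * (p z + pip) / (gp - 1) + am z * (p z + pim) / (gm - 1)"
proof -
  have "1 + al z = 2 * ap z" "1 - al z = 2 * am z"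
    using al_def frac[OF assms] by auto
  then have "rho z * e z = ap z * (rp z * ep z) + am z * (rm z * em z)"
    using eos_energy[OF assms] by (simp add: mult_ac)
  moreover have "rp z * ep z = (p z + pip) / (gp - 1)" "rm z * em z = (p z + pim) / (gm - 1)"
    using phase_energy[OF assms] pos[OF assms] by simp_all
  ultimately show ?thesis
    by simp
qed

lemma energy_rate:
  assumes "z \<in> D"
  shows "Dt ap z * (Xp z / (gp - 1) - Xm z / (gm - 1)) + Dt p z * (ap z / (gp - 1) + am z / (gm - 1))
         + (ap z * Xp z / (gp - 1) + am z * Xm z / (gm - 1)) * divg u z = 0"
proof -
  note diffs = state_differentiable[OF assms] rho_differentiable[OF assms]
  define A B where "A = (p z + pip) / (gp - 1)" and "B = (p z + pim) / (gm - 1)"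
  have "Dt (\<lambda>w. rho w * e w) z = - (rho z * e z + p z) * divg u z"
    using diffs internal_energy_rate[OF assms] density_rate[OF assms]
    by (simp add: material_deriv_mult algebra_simps)
  moreover have "Dt (\<lambda>w. rho w * e w) z
                 = Dt (\<lambda>w. ap w * (p w + pip) / (gp - 1) + am w * (p w + pim) / (gm - 1)) z"
    using mixture_internal_energy diffs gas by (intro material_deriv_cong_open(1)[OF D_open assms]) auto
  moreover have "\<dots> = Dt ap z * A + ap z * Dt p z / (gp - 1) - Dt ap z * B + am z * Dt p z / (gm - 1)"
    using diffs gas
    by (simp add: material_deriv_add material_deriv_divide_const material_deriv_mult am_rate[OF assms] A_def B_def)
      (simp add: add_divide_distrib diff_divide_distrib)
  moreover have "rho z * e z = ap z * A + am z * B"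
    using mixture_internal_energy[OF assms] by (simp add: A_def B_def)
  ultimately have "- (ap z * A + am z * B + p z) * divg u z
                   = Dt ap z * A + ap z * Dt p z / (gp - 1) - Dt ap z * B + am z * Dt p z / (gm - 1)"
    by simp
  moreover have "Xp z / (gp - 1) = A + p z" "Xm z / (gm - 1) = B + p z"
    using gas by (simp_all add: A_def B_def field_simps)
  moreover have am: "am z = 1 - ap z"
    using frac[OF assms] by simp
  ultimately show ?thesis
    unfolding times_divide_eq_right[symmetric] am by (simp add: algebra_simps diff_divide_distrib)
qed

lemma temperature_rate:
  assumes "z \<in> D"
  shows "gp * Dt p z / Xp z - Dt rp z / rp z = gm * Dt p z / Xm z - Dt rm z / rm z"
proof -
  define cp cm where "cp = Cvp * gp * (gp - 1)" and "cm = Cvm * gm * (gm - 1)"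
  have cross: "cm * rm w * Xp w = cp * rp w * Xm w" if "w \<in> D" for w
  proof -
    have "Xp w / (cp * rp w) = Xm w / (cm * rm w)"
      using eos_T[OF that] by (simp add: phase_temperature[OF that] cp_def cm_def mult.assoc)
    moreover have "cp * rp w \<noteq> 0" "cm * rm w \<noteq> 0"
      using gas pos[OF that] by (simp_all add: cp_def cm_def)
    ultimately show ?thesis
      by (simp add: field_simps)
  qed
  note diffs = state_differentiable[OF assms]
  have "Dt (\<lambda>w. cm * rm w * Xp w) z = Dt (\<lambda>w. cp * rp w * Xm w) z"
    using cross diffs by (intro material_deriv_cong_open(1)[OF D_open assms]) auto
  then have "cm * (Dt rm z * Xp z + rm z * gp * Dt p z) = cp * (Dt rp z * Xm z + rp z * gm * Dt p z)"
    using diffs by (simp add: material_deriv_mult material_deriv_add algebra_simps)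
  moreover define K where "K = cm * rm z * Xp z"
  have "K = cp * rp z * Xm z" "K \<noteq> 0"
    using cross[OF assms] gas pos[OF assms] phase_modulus_pos[OF assms] by (simp_all add: K_def cm_def cp_def)
  moreover have "K * (gp * Dt p z / Xp z) = cm * rm z * gp * Dt p z"
    "K * (Dt rm z / rm z) = cm * Xp z * Dt rm z"
    using pos[OF assms] phase_modulus_pos[OF assms] by (simp_all add: K_def)
  moreover have "K * (gm * Dt p z / Xm z) = cp * rp z * gm * Dt p z"
    "K * (Dt rp z / rp z) = cp * Xm z * Dt rp z"
    using pos[OF assms] phase_modulus_pos[OF assms] by (simp_all add: \<open>K = cp * rp z * Xm z\<close>)
  ultimately have "K * (gp * Dt p z / Xp z - Dt rp z / rp z) = K * (gm * Dt p z / Xm z - Dt rm z / rm z)"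
    by (simp add: right_diff_distrib algebra_simps)
  then show ?thesis
    using \<open>K \<noteq> 0\<close> by simp
qed

lemma phase_density_rate:
  assumes "z \<in> D"
  shows "ap z * Dt rp z = - rp z * (Dt ap z + ap z * divg u z)"
    and "am z * Dt rm z = - rm z * (- Dt ap z + am z * divg u z)"
  using partial_density_rate[OF assms] state_differentiable[OF assms]
  by (simp_all add: material_deriv_mult am_rate[OF assms] algebra_simps)

lemma volume_fraction_rate:
  assumes "z \<in> D"
  shows "Dt ap z = ap z * am z * (gm * Xp z - gp * Xm z) / (Xp z * Xm z) * Dt p z"
proof -
  note diffs = state_differentiable[OF assms]
  have "ap z * am z * (Dt rp z / rp z) = am z * (ap z * Dt rp z) / rp z"
    by simp
  also have "\<dots> = - am z * (Dt ap z + ap z * divg u z)"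
    using pos[OF assms] unfolding phase_density_rate(1)[OF assms] by simp
  finally have "ap z * am z * (Dt rp z / rp z) = - am z * (Dt ap z + ap z * divg u z)" .
  have "ap z * am z * (Dt rm z / rm z) = ap z * (am z * Dt rm z) / rm z"
    by simp
  also have "\<dots> = ap z * (Dt ap z - am z * divg u z)"
    using pos[OF assms] unfolding phase_density_rate(2)[OF assms] by (simp add: field_simps)
  finally have "ap z * am z * (Dt rm z / rm z) = ap z * (Dt ap z - am z * divg u z)" .
  moreover have "ap z * am z * (gp * Dt p z / Xp z - Dt rp z / rp z)
                 = ap z * am z * (gm * Dt p z / Xm z - Dt rm z / rm z)"
    using temperature_rate[OF assms] by simp
  ultimately have "(ap z + am z) * Dt ap z = ap z * am z * (gm / Xm z - gp / Xp z) * Dt p z"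
    using \<open>ap z * am z * (Dt rp z / rp z) = - am z * (Dt ap z + ap z * divg u z)\<close>
    by (simp add: algebra_simps)
  moreover have "gm / Xm z - gp / Xp z = (gm * Xp z - gp * Xm z) / (Xp z * Xm z)"
    using phase_modulus_pos[OF assms] by (simp add: field_simps)
  ultimately show ?thesis
    using frac[OF assms] by simp
qed

lemma pressure_rate:
  assumes "z \<in> D"
  shows "Dt p z = - divg u z / inv_rho_cs2 gp gm (Xp z) (Xm z) (ap z) (am z)"
proof -
  define Q where "Q = ap z * Xp z / (gp - 1) + am z * Xm z / (gm - 1)"
  define inv where "inv = inv_rho_cs2 gp gm (Xp z) (Xm z) (ap z) (am z)"
  define K where "K = ap z * am z * (gm * Xp z - gp * Xm z) / (Xp z * Xm z)"
  have "Q > 0"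
    using gas phase_modulus_pos[OF assms] frac[OF assms] unfolding Q_def
    by (smt (verit) divide_nonneg_pos divide_pos_pos mult_nonneg_nonneg mult_pos_pos)
  have "inv > 0"
    using gas phase_modulus_pos[OF assms] frac[OF assms] unfolding inv_def by (intro inv_rho_cs2_pos) auto
  have energy: "Dt p z * (K * (Xp z / (gp - 1) - Xm z / (gm - 1)) + ap z / (gp - 1) + am z / (gm - 1))
                 + Q * divg u z = 0"
    using energy_rate[OF assms, unfolded volume_fraction_rate[OF assms]] unfolding Q_def K_def
    by (simp add: algebra_simps)
  have identity: "K * (Xp z / (gp - 1) - Xm z / (gm - 1)) + ap z / (gp - 1) + am z / (gm - 1) = Q * inv"
    using gas phase_modulus_pos[OF assms] frac[OF assms] \<open>Q > 0\<close> unfolding K_def Q_def inv_def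
    by (intro inv_rho_cs2_identity) auto
  from energy have "Q * (Dt p z * inv + divg u z) = 0"
    unfolding identity by (simp add: algebra_simps)
  then have "Dt p z * inv = - divg u z"
    using \<open>Q > 0\<close> by simp
  then show ?thesis
    using \<open>Q > 0\<close> \<open>inv > 0\<close> unfolding inv_def[symmetric] by (simp add: field_simps)
qed

lemma phase_energy_rate:
  assumes "z \<in> D"
  shows "(gp - 1) * (Dt rp z * ep z + rp z * Dt ep z) = Dt p z"
    and "(gm - 1) * (Dt rm z * em z + rm z * Dt em z) = Dt p z"
proof -
  note diffs = state_differentiable[OF assms] phase_energy_differentiable[OF assms]
  have "Dt (\<lambda>w. (gp - 1) * rp w * ep w) z = Dt (\<lambda>w. p w + pip) z"
    "Dt (\<lambda>w. (gm - 1) * rm w * em w) z = Dt (\<lambda>w. p w + pim) z"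
    using eos_p diffs
    by (auto simp: sg_pressure_def diff_eq_eq intro!: material_deriv_cong_open(1)[OF D_open assms])
  then show "(gp - 1) * (Dt rp z * ep z + rp z * Dt ep z) = Dt p z"
    and "(gm - 1) * (Dt rm z * em z + rm z * Dt em z) = Dt p z"
    using diffs by (simp_all add: material_deriv_mult material_deriv_add distrib_left mult.assoc)
qed

lemma phase_entropy_rates:
  assumes "z \<in> D"
  shows "ap z * rp z * Dt (\<lambda>w. Sp (rp w) (ep w)) z + am z * rm z * Dt (\<lambda>w. Sm (rm w) (em w)) z = 0"
proof -
  note diffs = state_differentiable[OF assms] phase_energy_differentiable[OF assms]
  define T where "T = sg_temp gp Cvp pip (rp z) (ep z)"
  define Ep where "Ep = ap z * rp z * (Dt ep z - p z / (rp z)\<^sup>2 * Dt rp z)"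
  define Em where "Em = am z * rm z * (Dt em z - p z / (rm z)\<^sup>2 * Dt rm z)"
  have "T > 0" "sg_temp gm Cvm pim (rm z) (em z) = T"
    using T_pos[OF assms] eos_T[OF assms] by (simp_all add: T_def)
  then have Sp_rate: "T * Dt (\<lambda>w. Sp (rp w) (ep w)) z = Dt ep z - p z / (rp z)\<^sup>2 * Dt rp z"
    and Sm_rate: "T * Dt (\<lambda>w. Sm (rm w) (em w)) z = Dt em z - p z / (rm z)\<^sup>2 * Dt rm z"
    using material_deriv_entropy(1)[OF entp diffs(3,8)] material_deriv_entropy(1)[OF entm diffs(4,9)]
      pos[OF assms] eos_p[OF assms] by (simp_all add: T_def)
  have "(gp - 1) * rp z * ep z = p z + pip" "(gm - 1) * rm z * em z = p z + pim"
    using eos_p[OF assms] by (simp_all add: sg_pressure_def diff_eq_eq)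
  then have "(gp - 1) * Ep = ap z * Dt p z + Xp z * (Dt ap z + ap z * divg u z)"
    "(gm - 1) * Em = am z * Dt p z + Xm z * (- Dt ap z + am z * divg u z)"
    using phase_entropy_identity[OF _ _ phase_energy_rate(1)[OF assms] phase_density_rate(1)[OF assms]]
      phase_entropy_identity[OF _ _ phase_energy_rate(2)[OF assms] phase_density_rate(2)[OF assms]]
      pos[OF assms] by (simp_all add: Ep_def Em_def)
  then have "Ep = (ap z * Dt p z + Xp z * (Dt ap z + ap z * divg u z)) / (gp - 1)"
    "Em = (am z * Dt p z + Xm z * (- Dt ap z + am z * divg u z)) / (gm - 1)"
    using gas by (simp_all add: eq_divide_eq mult.commute)
  then have "Ep + Em = (ap z * Dt p z + Xp z * (Dt ap z + ap z * divg u z)) / (gp - 1)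
                       + (am z * Dt p z + Xm z * (- Dt ap z + am z * divg u z)) / (gm - 1)"
    by simp
  also have "\<dots> = 0"
    using energy_rate[OF assms] by (simp add: algebra_simps add_divide_distrib diff_divide_distrib)
  finally have "Ep + Em = 0" .
  moreover have "T * (ap z * rp z * Dt (\<lambda>w. Sp (rp w) (ep w)) z + am z * rm z * Dt (\<lambda>w. Sm (rm w) (em w)) z)
                 = Ep + Em"
    unfolding Ep_def Em_def Sp_rate[symmetric] Sm_rate[symmetric] by (simp add: algebra_simps)
  ultimately show ?thesis
    using \<open>T > 0\<close> by simp
qed

lemma entropy_rate:
  assumes "z \<in> D"
  shows "Dt s z = 0"
proof -
  note diffs = state_differentiable[OF assms] phase_energy_differentiable[OF assms] rho_differentiable[OF assms]
  have T: "sg_temp gp Cvp pip (rp z) (ep z) > 0" "sg_temp gm Cvm pim (rm z) (em z) > 0"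
    using T_pos[OF assms] eos_T[OF assms] by auto
  have "rp z > 0" "rm z > 0"
    using pos[OF assms] by auto
  note Sp_diff = material_deriv_entropy(2)[OF entp diffs(3,8) \<open>rp z > 0\<close> T(1)]
    and Sm_diff = material_deriv_entropy(2)[OF entm diffs(4,9) \<open>rm z > 0\<close> T(2)]
  define N where "N = (\<lambda>w. ap w * rp w * Sp (rp w) (ep w) + am w * rm w * Sm (rm w) (em w))"
  let ?Sp = "\<lambda>w. Sp (rp w) (ep w)" and ?Sm = "\<lambda>w. Sm (rm w) (em w)"
  have N_diff: "N differentiable (at z)"
    using diffs Sp_diff Sm_diff by (simp add: N_def)
  have s_eq: "s w = N w / rho w" if "w \<in> D" for w
  proof -
    have weights: "1 + (ap w - am w) = 2 * ap w" "1 - (ap w - am w) = 2 * am w"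
      using frac[OF that] by auto
    show ?thesis
      using rho_pos[OF that] unfolding s_def N_def rho_def weights by (simp add: field_simps)
  qed
  have "(\<lambda>w. N w / rho w) differentiable (at z)"
    using N_diff diffs rho_pos[OF assms] by simp
  with s_eq have s_diff: "s differentiable (at z)"
    by (rule material_deriv_cong_open(2)[OF D_open assms])
  have "rho w * s w = N w" if "w \<in> D" for w
    using s_eq[OF that] rho_pos[OF that] by simp
  then have "Dt (\<lambda>w. rho w * s w) z = Dt N z"
    using N_diff by (rule material_deriv_cong_open(1)[OF D_open assms])
  moreover have "Dt (\<lambda>w. rho w * s w) z = - divg u z * N z + rho z * Dt s z"
    using s_eq[OF assms] rho_pos[OF assms] diffs s_diff density_rate[OF assms]
    by (simp add: material_deriv_mult)
  moreover have "Dt N z = Dt (\<lambda>w. ap w * rp w * ?Sp w) z + Dt (\<lambda>w. am w * rm w * ?Sm w) z"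
    unfolding N_def by (rule material_deriv_add) (use diffs Sp_diff Sm_diff in simp_all)
  moreover have "Dt (\<lambda>w. ap w * rp w * ?Sp w) z = Dt (\<lambda>w. ap w * rp w) z * ?Sp z + ap z * rp z * Dt ?Sp z"
    by (rule material_deriv_mult) (use diffs Sp_diff in simp_all)
  moreover have "Dt (\<lambda>w. am w * rm w * ?Sm w) z = Dt (\<lambda>w. am w * rm w) z * ?Sm z + am z * rm z * Dt ?Sm z"
    by (rule material_deriv_mult) (use diffs Sm_diff in simp_all)
  ultimately have "rho z * Dt s z = ap z * rp z * Dt ?Sp z + am z * rm z * Dt ?Sm z"
    using partial_density_rate[OF assms] by (simp add: N_def algebra_simps)
  then show ?thesis
    using phase_entropy_rates[OF assms] rho_pos[OF assms] by simp
qed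

lemma velocity_equation:
  assumes "z \<in> D"
  shows "Dt (\<lambda>w. u w $ j) z + px j p z / rho z = g $ j"
  using velocity_rate[OF assms, of j] rho_pos[OF assms] by (simp add: field_simps)

lemma pressure_equation:
  assumes "z \<in> D"
  shows "Dt p z + rho z * (mix_cs gp gm pip pim (al z) (rp z) (rm z) (p z))\<^sup>2 * divg u z = 0"
  using pressure_rate[OF assms]
    mix_cs_sq[where ap = "ap z" and am = "am z" and rp = "rp z" and rm = "rm z" and p = "p z"]
    gas phase_modulus_pos[OF assms] pos[OF assms] frac[OF assms]
  by (simp add: al_def rho_def)

lemma volume_fraction_equation:
  assumes "z \<in> D"
  shows "Dt al z + (1 - (al z)\<^sup>2) * mix_delta gp gm pip pim (al z) (rp z) (rm z) (p z) * divg u z = 0"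
proof -
  let ?inv = "inv_rho_cs2 gp gm (Xp z) (Xm z) (ap z) (am z)"
  have "?inv > 0"
    using gas phase_modulus_pos[OF assms] frac[OF assms] by (intro inv_rho_cs2_pos) auto
  have "al = (\<lambda>w. ap w - am w)"
    using al_def by auto
  then have "Dt al z = 2 * Dt ap z"
    using state_differentiable[OF assms] by (simp add: material_deriv_diff am_rate[OF assms])
  also have "\<dots> = 2 * ap z * am z * (gm * pip - gp * pim) / (Xp z * Xm z) * Dt p z"
    unfolding volume_fraction_rate[OF assms] by (simp add: algebra_simps)
  finally have rate: "Dt al z = - 2 * ap z * am z * (gm * pip - gp * pim) / (Xp z * Xm z) * divg u z / ?inv"
    unfolding pressure_rate[OF assms] by simp
  have weight: "1 - (al z)\<^sup>2 = 4 * ap z * am z"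
    using frac[OF assms] al_def[of z] by (simp add: power2_eq_square algebra_simps) algebra
  have delta: "mix_delta gp gm pip pim (al z) (rp z) (rm z) (p z)
                 = (gm * pip - gp * pim) / (2 * ?inv * Xp z * Xm z)"
    unfolding al_def using gas phase_modulus_pos[OF assms] pos[OF assms] frac[OF assms]
    by (intro mix_delta_eq) auto
  \<comment> \<open>for free variables, where the convention x / 0 = 0 makes the identity unconditional\<close>
  have "- 2 * a * m * c / (X * Y) * t / I + 4 * a * m * (c / (2 * I * X * Y)) * t = 0"
    for a m c X Y I t :: real
    by (cases "X = 0 \<or> Y = 0 \<or> I = 0") (auto simp: field_simps)
  then show ?thesis
    unfolding rate weight delta .
qed

end

theorem mainTheorem1:
  fixes gp gm Cvp Cvm pip pim :: real
    and D :: "(real \<times> (real^'n)) set"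
    and ap am rp rm p e ep em :: "real \<times> (real^'n) \<Rightarrow> real"
    and u :: "real \<times> (real^'n) \<Rightarrow> real^'n"
    and g :: "real^'n"
    and Sp Sm :: "real \<Rightarrow> real \<Rightarrow> real"
  defines "rho \<equiv> \<lambda>z. ap z * rp z + am z * rm z"
    and "al \<equiv> \<lambda>z. ap z - am z"
    and "EE \<equiv> \<lambda>z. e z + (norm (u z))\<^sup>2 / 2"
    and "s \<equiv> \<lambda>z. ((1 + (ap z - am z)) * rp z * Sp (rp z) (ep z)
                    + (1 - (ap z - am z)) * rm z * Sm (rm z) (em z))
                 / (2 * (ap z * rp z + am z * rm z))"
  assumes gas: "gp > 1" "gm > 1" "Cvp > 0" "Cvm > 0" "pip \<ge> 0" "pim \<ge> 0"
    and entp: "is_entropy gp Cvp pip Sp" and entm: "is_entropy gm Cvm pim Sm"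
    and D_open: "open D"
    and diff: "\<And>z. z \<in> D \<Longrightarrow> ap differentiable (at z) \<and> am differentiable (at z) \<and>
                 rp differentiable (at z) \<and> rm differentiable (at z) \<and> u differentiable (at z) \<and>
                 p differentiable (at z) \<and> e differentiable (at z)"
    and frac: "\<And>z. z \<in> D \<Longrightarrow> 0 \<le> ap z \<and> ap z \<le> 1 \<and> 0 \<le> am z \<and> am z \<le> 1 \<and> ap z + am z = 1"
    and pos: "\<And>z. z \<in> D \<Longrightarrow> rp z > 0 \<and> rm z > 0 \<and> e z > 0"
    and eos_energy: "\<And>z. z \<in> D \<Longrightarrow>
          (1 + al z) * rp z * ep z + (1 - al z) * rm z * em z = 2 * rho z * e z"
    and eos_p: "\<And>z. z \<in> D \<Longrightarrow>
          sg_pressure gp pip (rp z) (ep z) = p z \<and> sg_pressure gm pim (rm z) (em z) = p z"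
    and eos_T: "\<And>z. z \<in> D \<Longrightarrow> sg_temp gp Cvp pip (rp z) (ep z) = sg_temp gm Cvm pim (rm z) (em z)"
    and T_pos: "\<And>z. z \<in> D \<Longrightarrow> sg_temp gp Cvp pip (rp z) (ep z) > 0"
    and mass_p: "\<And>z. z \<in> D \<Longrightarrow>
          pt (\<lambda>w. ap w * rp w) z + divg (\<lambda>w. (ap w * rp w) *\<^sub>R u w) z = 0"
    and mass_m: "\<And>z. z \<in> D \<Longrightarrow>
          pt (\<lambda>w. am w * rm w) z + divg (\<lambda>w. (am w * rm w) *\<^sub>R u w) z = 0"
    and momentum: "\<And>z j. z \<in> D \<Longrightarrow>
          pt (\<lambda>w. rho w * (u w $ j)) z
          + (\<Sum>i\<in>UNIV. px i (\<lambda>w. rho w * (u w $ i) * (u w $ j) + (if i = j then p w else 0)) z)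
          = rho z * (g $ j)"
    and energy: "\<And>z. z \<in> D \<Longrightarrow>
          pt (\<lambda>w. rho w * EE w) z + divg (\<lambda>w. (rho w * EE w + p w) *\<^sub>R u w) z
          = rho z * (g \<bullet> u z)"
  shows "\<forall>z\<in>D.
      (\<forall>j. pt (\<lambda>w. u w $ j) z + adv u (\<lambda>w. u w $ j) z + px j p z / rho z = g $ j)
    \<and> pt p z + adv u p z
        + rho z * (mix_cs gp gm pip pim (al z) (rp z) (rm z) (p z))\<^sup>2 * divg u z = 0
    \<and> pt al z + adv u al z
        + (1 - (al z)\<^sup>2) * mix_delta gp gm pip pim (al z) (rp z) (rm z) (p z) * divg u z = 0
    \<and> pt s z + adv u s z = 0"
proof -
  interpret homogeneous_two_fluid gp gm Cvp Cvm pip pim D ap am rp rm p e ep em rho al EE s u g Sp Sm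
    by unfold_locales (use assms in \<open>auto simp: rho_def al_def EE_def s_def\<close>)
  show ?thesis
    using velocity_equation pressure_equation volume_fraction_equation entropy_rate
    by (simp add: material_deriv_def)
qed

end
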